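(* Let $1<a_1<a_2$ be coprime integers. There exists $T$ such that for all $t\in(T,\infty)$, $|P(t)|=|\mu_t'(r_0(t))|>\frac{1}{a_2}$. Consequently, the set $\mathcal{T}=\{t\in(1,\infty): |P(t)|>\frac{1}{a_2},\ r_0(t)\in\mathbb{Q}\}$ is dense in some ray $(T,\infty)$ (i.e. $(T,\infty)$ is contained in the closure of $\mathcal{T}$).
   Context: For $t\in[1,\infty)$ and $(u,v)\in\mathbb{R}^2$, $\|(u,v)\|_t=(|u|^t+|v|^t)^{1/t}$. Define $\mu_t(r)=\left\|\left(\frac{1-r}{a_1},\frac{r}{a_2}\right)\right\|_t$ for $r\in[0,1]$, $r_0(t)=\min\{r\in[0,1]:\mu_t(r)=\frac{1}{a_2}\}$, and $P(t)=\mu_t'(r_0(t))$ (derivative in $r$). *)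

theory Defs
  imports "HOL-Analysis.Analysis"
begin

definition tnorm :: "real \<Rightarrow> real \<Rightarrow> real \<Rightarrow> real" where
  "tnorm t u v = (\<bar>u\<bar> powr t + \<bar>v\<bar> powr t) powr (1 / t)"

definition mu :: "int \<Rightarrow> int \<Rightarrow> real \<Rightarrow> real \<Rightarrow> real" where
  "mu a1 a2 t r = tnorm t ((1 - r) / real_of_int a1) (r / real_of_int a2)"

definition r0 :: "int \<Rightarrow> int \<Rightarrow> real \<Rightarrow> real" where
  "r0 a1 a2 t = (LEAST r. r \<in> {0..1} \<and> mu a1 a2 t r = 1 / real_of_int a2)"

definition P :: "int \<Rightarrow> int \<Rightarrow> real \<Rightarrow> real" where
  "P a1 a2 t = deriv (mu a1 a2 t) (r0 a1 a2 t)"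

end

theory Submission
  imports Defs "HOL-Real_Asymp.Real_Asymp"
begin

text \<open>
  Write a = a1, b = a2 and G_t(r) = (b (1 - r) / a)^t + r^t (mu_pow a b t r below), so that on [0, 1]
  mu_t(r) = G_t(r)^(1/t) / b, and mu_t(r) = 1/b exactly where G_t(r) = 1.
  For t > 1, G_t is strictly convex with G_t(0) > 1 = G_t(1); hence a root of G_t - 1
  in (0, 1) is r_0(t), with G_t > 1 to its left and G_t < 1 to its right.
  At the root, P(t) = r^(t-1) / b - s^(t-1) / a, where s = b (1 - r) / a and s^t + r^t = 1.
  Since G_t(rho) tends to 0 for rho = 1 - a / (2b), the root eventually lies below rho;
  then r^(t-1) tends to 0 while s^(t-1) >= 1 - r^t tends to 1, so P(t) < -1/b for large t.
  For density: at a fixed r, G_t(r) decreases in t, so r_0 is strictly decreasing, and for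
  every rational q strictly between r_0(t + e) and r_0(t) the intermediate value theorem
  in the exponent gives t' in [t, t + e] with r_0(t') = q.
\<close>

definition mu_pow :: "real \<Rightarrow> real \<Rightarrow> real \<Rightarrow> real \<Rightarrow> real" where
  "mu_pow a b t r = (b * (1 - r) / a) powr t + r powr t"

definition mu_pow_deriv :: "real \<Rightarrow> real \<Rightarrow> real \<Rightarrow> real \<Rightarrow> real" where
  "mu_pow_deriv a b t r = t * (r powr (t - 1) - b / a * (b * (1 - r) / a) powr (t - 1))"

lemma mu_eq_mu_pow:
  fixes a1 a2 :: int and t r :: real
  assumes "0 < a1" "0 < a2" "0 < t" "0 \<le> r" "r \<le> 1"
  shows "mu a1 a2 t r = mu_pow a1 a2 t r powr (1 / t) / a2"
proof -
  have "\<bar>(1 - r) / a1\<bar> = (a2 * (1 - r) / a1) / a2" "\<bar>r / a2\<bar> = r / a2"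
    using assms by simp_all
  then have "mu a1 a2 t r = (mu_pow a1 a2 t r / a2 powr t) powr (1 / t)"
    unfolding mu_def tnorm_def by (simp only: mu_pow_def powr_divide add_divide_distrib)
  also have "\<dots> = mu_pow a1 a2 t r powr (1 / t) / a2"
    using assms by (simp add: powr_divide powr_powr)
  finally show ?thesis .
qed

lemma mu_eq_inverse_iff:
  fixes a1 a2 :: int and t r :: real
  assumes "0 < a1" "0 < a2" "0 < t" "0 \<le> r" "r \<le> 1"
  shows "mu a1 a2 t r = 1 / a2 \<longleftrightarrow> mu_pow a1 a2 t r = 1"
proof -
  have "mu a1 a2 t r = 1 / a2 \<longleftrightarrow> mu_pow a1 a2 t r powr (1 / t) = 1"
    using assms by (simp add: mu_eq_mu_pow divide_cancel_right)
  also have "\<dots> \<longleftrightarrow> mu_pow a1 a2 t r = 1"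
  proof -
    have "mu_pow a1 a2 t r = (mu_pow a1 a2 t r powr (1 / t)) powr t"
      using assms by (simp add: powr_powr mu_pow_def)
    then show ?thesis by auto
  qed
  finally show ?thesis .
qed

lemma mu_pow_at_one [simp]: "mu_pow a b t 1 = 1"
  by (simp add: mu_pow_def)

lemma mu_pow_at_zero_gt_one:
  assumes "0 < a" "a < b" "0 < t"
  shows "1 < mu_pow a b t 0"
proof -
  have "1 powr t < (b / a) powr t"
    using assms by (intro powr_less_mono2) auto
  then show ?thesis by (simp add: mu_pow_def)
qed

lemma continuous_on_mu_pow:
  assumes "0 < a" "0 < b" "0 < t"
  shows "continuous_on {0..1} (mu_pow a b t)"
  unfolding mu_pow_def [abs_def] using assms
  by (intro continuous_intros continuous_on_powr') (auto simp: field_simps)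

lemma has_real_derivative_mu_pow:
  assumes "0 < a" "0 < b" "0 < r" "r < 1"
  shows "(mu_pow a b t has_real_derivative mu_pow_deriv a b t r) (at r)"
proof -
  have inner: "((\<lambda>r. b * (1 - r) / a) has_real_derivative - (b / a)) (at r)"
    using assms by (auto intro!: derivative_eq_intros)
  have pos: "0 < b * (1 - r) / a"
    using assms by simp
  have "(mu_pow a b t has_real_derivative
           t * (b * (1 - r) / a) powr (t - of_nat 1) * - (b / a) + t * r powr (t - 1)) (at r)"
    unfolding mu_pow_def [abs_def]
    by (rule DERIV_add[OF DERIV_fun_powr[OF inner pos] has_real_derivative_powr]) (use assms in simp)
  then show ?thesis
    by (rule DERIV_cong) (simp add: mu_pow_deriv_def algebra_simps)
qed

lemma mu_pow_deriv_strict_mono: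
  assumes "0 < a" "0 < b" "1 < t" "0 < x" "x < y" "y < 1"
  shows "mu_pow_deriv a b t x < mu_pow_deriv a b t y"
proof -
  have "x powr (t - 1) < y powr (t - 1)"
    using assms by (intro powr_less_mono2) auto
  moreover have "(b * (1 - y) / a) powr (t - 1) < (b * (1 - x) / a) powr (t - 1)"
    using assms by (intro powr_less_mono2) (auto simp: divide_strict_right_mono)
  ultimately have "x powr (t - 1) - b / a * (b * (1 - x) / a) powr (t - 1)
                 < y powr (t - 1) - b / a * (b * (1 - y) / a) powr (t - 1)"
    using assms by (smt (verit) mult_strict_left_mono divide_pos_pos)
  then show ?thesis
    using assms by (simp add: mu_pow_deriv_def)
qed

lemma secant_slope_strict_mono:
  fixes f f' :: "real \<Rightarrow> real"
  assumes "x < y" "y < z" "continuous_on {x..z} f"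
    and deriv: "\<And>u. x < u \<Longrightarrow> u < z \<Longrightarrow> (f has_real_derivative f' u) (at u)"
    and mono: "\<And>u v. x < u \<Longrightarrow> u < v \<Longrightarrow> v < z \<Longrightarrow> f' u < f' v"
  shows "(f y - f x) / (y - x) < (f z - f y) / (z - y)"
proof -
  have diff: "f differentiable at u" if "x < u" "u < z" for u
    using deriv[OF that] real_differentiable_def by blast
  obtain l u where u: "x < u" "u < y" "(f has_real_derivative l) (at u)" "f y - f x = (y - x) * l"
    using MVT[of x y f] assms diff continuous_on_subset[OF assms(3)] by fastforce
  obtain m v where v: "y < v" "v < z" "(f has_real_derivative m) (at v)" "f z - f y = (z - y) * m"
    using MVT[of y z f] assms diff continuous_on_subset[OF assms(3)] by fastforce
  have "l = f' u" "m = f' v"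
    using u v assms by (auto intro: DERIV_unique deriv)
  then show ?thesis
    using u v assms mono[of u v] by simp
qed

lemma mu_pow_secant_slope_strict_mono:
  assumes "0 < a" "0 < b" "1 < t" "0 \<le> x" "x < y" "y < z" "z \<le> 1"
  shows "(mu_pow a b t y - mu_pow a b t x) / (y - x) < (mu_pow a b t z - mu_pow a b t y) / (z - y)"
  using assms
  by (intro secant_slope_strict_mono[where f' = "mu_pow_deriv a b t"]
        has_real_derivative_mu_pow mu_pow_deriv_strict_mono
        continuous_on_subset[OF continuous_on_mu_pow]) auto

lemma mu_pow_gt_one_left_of_root:
  assumes "0 < a" "0 < b" "1 < t" "0 \<le> q" "q < r" "r < 1" "mu_pow a b t r = 1"
  shows "1 < mu_pow a b t q"
proof -
  have "(1 - mu_pow a b t q) / (r - q) < 0"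
    using mu_pow_secant_slope_strict_mono[of a b t q r 1] assms by simp
  then show ?thesis
    using assms by (simp add: divide_less_0_iff)
qed

lemma mu_pow_lt_one_right_of_root:
  assumes "0 < a" "0 < b" "1 < t" "0 \<le> r" "r < q" "q < 1" "mu_pow a b t r = 1"
  shows "mu_pow a b t q < 1"
proof -
  have "(mu_pow a b t q - 1) / (q - r) < (1 - mu_pow a b t q) / (1 - q)"
    using mu_pow_secant_slope_strict_mono[of a b t r q 1] assms by simp
  then show ?thesis
    using assms by (smt (verit) divide_nonneg_pos divide_nonpos_pos)
qed

lemma r0_eq_root:
  fixes a1 a2 :: int and t r :: real
  assumes "0 < a1" "a1 < a2" "1 < t" "0 < r" "r < 1" "mu_pow a1 a2 t r = 1"
  shows "r0 a1 a2 t = r"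
  unfolding r0_def
proof (rule Least_equality)
  show "r \<in> {0..1} \<and> mu a1 a2 t r = 1 / a2"
    using assms by (simp add: mu_eq_inverse_iff)
next
  fix y assume "y \<in> {0..1} \<and> mu a1 a2 t y = 1 / a2"
  then have "0 \<le> y" "y \<le> 1" "mu_pow a1 a2 t y = 1"
    using assms by (auto simp: mu_eq_inverse_iff)
  then show "r \<le> y"
    using assms mu_pow_gt_one_left_of_root[of a1 a2 t y r] by force
qed

lemma P_eq_at_root:
  fixes a1 a2 :: int and t r :: real
  assumes "0 < a1" "a1 < a2" "1 < t" "0 < r" "r < 1" "mu_pow a1 a2 t r = 1"
  shows "P a1 a2 t = r powr (t - 1) / a2 - (a2 * (1 - r) / a1) powr (t - 1) / a1"
proof -
  let ?d = "mu_pow_deriv a1 a2 t r"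
  have "(mu_pow a1 a2 t has_real_derivative ?d) (at r)"
    using assms by (intro has_real_derivative_mu_pow) auto
  from DERIV_cdivide[OF DERIV_fun_powr[OF this], of "1 / t" a2]
  have "((\<lambda>x. mu_pow a1 a2 t x powr (1 / t) / a2) has_real_derivative ?d / (t * a2)) (at r)"
    using assms by simp
  then have "(mu a1 a2 t has_real_derivative ?d / (t * a2)) (at r)"
  proof (rule has_field_derivative_transform_within_open[where S = "{0<..<1}"])
    show "\<And>x. x \<in> {0<..<1} \<Longrightarrow> mu_pow a1 a2 t x powr (1 / t) / a2 = mu a1 a2 t x"
      using assms by (simp add: mu_eq_mu_pow)
  qed (use assms in auto)
  then have "P a1 a2 t = ?d / (t * a2)"
    using assms by (simp add: P_def r0_eq_root DERIV_imp_deriv)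
  also have "?d / (t * a2) = (r powr (t - 1) - a2 / a1 * (a2 * (1 - r) / a1) powr (t - 1)) / a2"
    using assms by (simp add: mu_pow_deriv_def)
  finally show ?thesis
    using assms by (simp add: field_simps)
qed

lemma mu_pow_lt_one_at_larger_exponent:
  assumes "0 < a" "0 < b" "0 < t" "t < t'" "0 < r" "r < 1" "mu_pow a b t r = 1"
  shows "mu_pow a b t' r < 1"
proof -
  define s where "s = b * (1 - r) / a"
  have "0 < s" "0 < r powr t" "s powr t + r powr t = 1"
    using assms by (simp_all add: s_def mu_pow_def)
  then have "s < 1"
    using assms by (smt (verit) powr_mono2 powr_one_eq_one)
  then have "s powr t' < s powr t" "r powr t' < r powr t"
    using \<open>0 < s\<close> assms by (auto intro: powr_less_mono')
  then show ?thesis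
    using \<open>s powr t + r powr t = 1\<close> by (simp add: mu_pow_def s_def)
qed

lemma mu_pow_root_strict_antimono:
  assumes "0 < a" "0 < b" "1 < t" "t < t'"
    and "0 < r" "r < 1" "mu_pow a b t r = 1" "0 < r'" "r' < 1" "mu_pow a b t' r' = 1"
  shows "r' < r"
proof -
  have "mu_pow a b t' r < 1"
    using assms by (intro mu_pow_lt_one_at_larger_exponent[of a b t]) auto
  moreover have "1 < mu_pow a b t' r" if "r < r'"
    using assms that by (intro mu_pow_gt_one_left_of_root[of a b t' r r']) auto
  ultimately show ?thesis
    using assms by (metis less_irrefl not_less_iff_gr_or_eq)
qed

lemma rational_roots_dense:
  assumes "0 < a" "0 < b" "1 \<le> T"
    and roots: "\<And>t. T < t \<Longrightarrow> \<exists>r\<in>{0<..<1}. mu_pow a b t r = 1"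
  shows "{T<..} \<subseteq> closure {t \<in> {T<..}. \<exists>q\<in>\<rat> \<inter> {0<..<1}. mu_pow a b t q = 1}"
proof
  fix t0 assume "t0 \<in> {T<..}"
  show "t0 \<in> closure {t \<in> {T<..}. \<exists>q\<in>\<rat> \<inter> {0<..<1}. mu_pow a b t q = 1}"
    unfolding closure_approachable
  proof (intro allI impI)
    fix e :: real assume "0 < e"
    define t1 where "t1 = t0 + e / 2"
    have t: "T < t0" "t0 < t1" "1 < t0"
      using \<open>t0 \<in> {T<..}\<close> \<open>0 < e\<close> assms by (auto simp: t1_def)
    obtain r where r: "0 < r" "r < 1" "mu_pow a b t0 r = 1"
      using roots[of t0] t by auto
    obtain r' where r': "0 < r'" "r' < 1" "mu_pow a b t1 r' = 1"
      using roots[of t1] t by auto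
    have "r' < r"
      by (rule mu_pow_root_strict_antimono[OF assms(1,2) t(3) t(2) r r'])
    then obtain q where q: "q \<in> \<rat>" "r' < q" "q < r"
      by (meson Rats_dense_in_real)
    have "1 < mu_pow a b t0 q"
      using assms t r r' q by (intro mu_pow_gt_one_left_of_root[of a b t0 q r]) auto
    moreover have "mu_pow a b t1 q < 1"
      using assms t r r' q by (intro mu_pow_lt_one_right_of_root[of a b t1 r' q]) auto
    moreover have "continuous_on {t0..t1} (\<lambda>t. mu_pow a b t q)"
      unfolding mu_pow_def using assms q r r' by (intro continuous_intros) auto
    ultimately obtain t' where t': "t0 \<le> t'" "t' \<le> t1" "mu_pow a b t' q = 1"
      using IVT2'[of "\<lambda>t. mu_pow a b t q" t1 1 t0] t by force
    then show "\<exists>t\<in>{t \<in> {T<..}. \<exists>q\<in>\<rat> \<inter> {0<..<1}. mu_pow a b t q = 1}. dist t t0 < e"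
      using t q r r' \<open>0 < e\<close> by (intro bexI[of _ t']) (auto simp: dist_real_def t1_def)
  qed
qed

lemma root_slope_lower_bound:
  fixes a b t r \<rho> :: real
  assumes "0 < a" "0 < b" "1 < t" "0 < r" "r \<le> \<rho>" "\<rho> < 1" "mu_pow a b t r = 1"
  shows "(1 - \<rho> powr t) / a - \<rho> powr (t - 1) / b
           \<le> (b * (1 - r) / a) powr (t - 1) / a - r powr (t - 1) / b"
proof -
  define s where "s = b * (1 - r) / a"
  have "0 < s" "s powr t + r powr t = 1"
    using assms by (simp_all add: s_def mu_pow_def)
  then have "s \<le> 1"
    using assms by (smt (verit) powr_less_mono2 powr_one_eq_one powr_nonneg_iff)
  then have "1 - \<rho> powr t \<le> s powr (t - 1)"
    using \<open>0 < s\<close> \<open>s powr t + r powr t = 1\<close> assms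
    by (smt (verit) powr_mono' powr_mono2 powr_nonneg_iff)
  moreover have "r powr (t - 1) \<le> \<rho> powr (t - 1)"
    using assms by (intro powr_mono2) auto
  ultimately show ?thesis
    using assms unfolding s_def[symmetric]
    by (smt (verit) divide_right_mono)
qed

lemma eventually_root_with_steep_slope:
  fixes a b :: real
  assumes "0 < a" "a < b"
  shows "\<forall>\<^sub>F t in at_top. \<exists>r\<in>{0<..<1}. mu_pow a b t r = 1 \<and>
           1 / b < (b * (1 - r) / a) powr (t - 1) / a - r powr (t - 1) / b"
proof -
  \<comment> \<open>any \<open>\<rho> < 1\<close> with \<open>b(1 - \<rho>)/a < 1\<close> would do\<close>
  define \<rho> where "\<rho> = 1 - a / (2 * b)"
  have \<rho>: "0 < \<rho>" "\<rho> < 1" "b * (1 - \<rho>) / a = 1 / 2"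
    using assms by (auto simp: \<rho>_def field_simps)
  have "((\<lambda>t. mu_pow a b t \<rho>) \<longlongrightarrow> 0) at_top"
    unfolding mu_pow_def \<rho>(3) using \<rho>(1,2) by (intro tendsto_add_zero; real_asymp)
  moreover have "((\<lambda>t. (1 - \<rho> powr t) / a - \<rho> powr (t - 1) / b) \<longlongrightarrow> 1 / a) at_top"
    using \<rho>(1,2) assms by (real_asymp simp add: inverse_eq_divide)
  moreover have "1 / b < 1 / a"
    using assms by (simp add: frac_less2)
  ultimately have "\<forall>\<^sub>F t in at_top. 1 < t \<and> mu_pow a b t \<rho> < 1 \<and>
                      1 / b < (1 - \<rho> powr t) / a - \<rho> powr (t - 1) / b"
    by (intro eventually_conj eventually_gt_at_top order_tendstoD) auto
  then show ?thesis
  proof (rule eventually_mono)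
    fix t assume t: "1 < t \<and> mu_pow a b t \<rho> < 1 \<and> 1 / b < (1 - \<rho> powr t) / a - \<rho> powr (t - 1) / b"
    have "1 < mu_pow a b t 0"
      using assms t by (intro mu_pow_at_zero_gt_one) auto
    moreover have "continuous_on {0..\<rho>} (mu_pow a b t)"
      using assms t \<rho> by (intro continuous_on_subset[OF continuous_on_mu_pow]) auto
    ultimately obtain r where r: "0 \<le> r" "r \<le> \<rho>" "mu_pow a b t r = 1"
      using IVT2'[of "mu_pow a b t" \<rho> 1 0] t \<rho> by force
    with \<open>1 < mu_pow a b t 0\<close> have "0 < r"
      by (cases "r = 0") auto
    then show "\<exists>r\<in>{0<..<1}. mu_pow a b t r = 1 \<and>
                 1 / b < (b * (1 - r) / a) powr (t - 1) / a - r powr (t - 1) / b"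
      using r t \<rho> assms root_slope_lower_bound[of a b t r \<rho>]
      by (intro bexI[of _ r]) auto
  qed
qed

lemma eventually_root_and_abs_P_gt:
  fixes a1 a2 :: int
  assumes "0 < a1" "a1 < a2"
  shows "\<forall>\<^sub>F t in at_top. 1 < t \<and> (\<exists>r\<in>{0<..<1}. mu_pow a1 a2 t r = 1) \<and> 1 / a2 < \<bar>P a1 a2 t\<bar>"
proof -
  have "\<forall>\<^sub>F t in at_top. \<exists>r::real\<in>{0<..<1}. mu_pow a1 a2 t r = 1 \<and>
           1 / a2 < (a2 * (1 - r) / a1) powr (t - 1) / a1 - r powr (t - 1) / a2"
    using assms by (intro eventually_root_with_steep_slope) simp_all
  with eventually_gt_at_top[of 1] show ?thesis
    by eventually_elim (use assms in \<open>auto simp: P_eq_at_root\<close>)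
qed

theorem proposition4:
  fixes a1 a2 :: int
  assumes "1 < a1" and "a1 < a2" and "coprime a1 a2"
  shows "\<exists>T\<ge>1. (\<forall>t>T. \<bar>P a1 a2 t\<bar> > 1 / real_of_int a2) \<and>
           {T<..} \<subseteq> closure {t \<in> {1<..}. \<bar>P a1 a2 t\<bar> > 1 / real_of_int a2 \<and> r0 a1 a2 t \<in> \<rat>}"
proof -
  \<comment> \<open>only \<open>0 < a1 < a2\<close> is used\<close>
  obtain T where T: "\<And>t. T \<le> t \<Longrightarrow>
      1 < t \<and> (\<exists>r\<in>{0<..<1}. mu_pow a1 a2 t r = 1) \<and> 1 / a2 < \<bar>P a1 a2 t\<bar>"
    using eventually_root_and_abs_P_gt[of a1 a2] assms
    unfolding eventually_at_top_linorder by auto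
  then have "1 < T"
    by blast
  have "{T<..} \<subseteq> closure {t \<in> {T<..}. \<exists>q\<in>\<rat> \<inter> {0<..<1}. mu_pow a1 a2 t q = 1}"
    using assms T \<open>1 < T\<close> by (intro rational_roots_dense) auto
  also have "\<dots> \<subseteq> closure {t \<in> {1<..}. \<bar>P a1 a2 t\<bar> > 1 / a2 \<and> r0 a1 a2 t \<in> \<rat>}"
    using assms T \<open>1 < T\<close> by (intro closure_mono) (auto simp: r0_eq_root)
  finally show ?thesis
    using T \<open>1 < T\<close> by (intro exI[of _ T]) auto
qed

end
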